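(* Let $G$ be a graph. Then $G$ has exactly one minimum zero forcing set (i.e., $G$ is a unique zero forcing graph) if and only if $G$ has no edges.
   Context: Zero forcing: in a graph $G$, starting with an initial set $S\subseteq V(G)$ of active vertices, repeatedly apply the rule: if an active vertex $u$ has exactly one non-active neighbor $v$, then $v$ becomes active. $S$ is a zero forcing set if eventually all vertices become active; a minimum zero forcing set is a zero forcing set of minimum size. *)

theory Defs
  imports Main
begin

definition simple_graph :: "'a set \<Rightarrow> ('a \<Rightarrow> 'a \<Rightarrow> bool) \<Rightarrow> bool" where
  "simple_graph V E \<longleftrightarrow> finite V \<and> (\<forall>u v. E u v \<longrightarrow> u \<in> V \<and> v \<in> V)
     \<and> (\<forall>u v. E u v \<longrightarrow> E v u) \<and> (\<forall>u. \<not> E u u)"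

inductive_set zf_closure :: "'a set \<Rightarrow> ('a \<Rightarrow> 'a \<Rightarrow> bool) \<Rightarrow> 'a set \<Rightarrow> 'a set"
  for V E S where
  init: "v \<in> S \<Longrightarrow> v \<in> zf_closure V E S"
| force: "\<lbrakk>u \<in> zf_closure V E S; v \<in> V; E u v;
           \<forall>w \<in> V. E u w \<and> w \<noteq> v \<longrightarrow> w \<in> zf_closure V E S\<rbrakk>
          \<Longrightarrow> v \<in> zf_closure V E S"

definition zero_forcing_set :: "'a set \<Rightarrow> ('a \<Rightarrow> 'a \<Rightarrow> bool) \<Rightarrow> 'a set \<Rightarrow> bool" where
  "zero_forcing_set V E S \<longleftrightarrow> S \<subseteq> V \<and> V \<subseteq> zf_closure V E S"

definition min_zero_forcing_set :: "'a set \<Rightarrow> ('a \<Rightarrow> 'a \<Rightarrow> bool) \<Rightarrow> 'a set \<Rightarrow> bool" where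
  "min_zero_forcing_set V E S \<longleftrightarrow> zero_forcing_set V E S
     \<and> (\<forall>T. zero_forcing_set V E T \<longrightarrow> card S \<le> card T)"

end

theory Submission
  imports Defs
begin

text \<open>Forcing chains can be reversed. Record a run of the forcing process started
from a zero forcing set \<open>S\<close> as a list of forces \<open>u\<^sub>1 \<rightarrow> v\<^sub>1, \<dots>, u\<^sub>k \<rightarrow> v\<^sub>k\<close>.
Running it backwards, each \<open>v\<^sub>i\<close> can force \<open>u\<^sub>i\<close>, because when \<open>u\<^sub>i\<close> forced \<open>v\<^sub>i\<close>
all other neighbours of \<open>u\<^sub>i\<close> were already active; hence \<open>V - {u\<^sub>1, \<dots>, u\<^sub>k}\<close> is
again a zero forcing set, and it has the size of \<open>S\<close> since both the forced and the
forcing vertices are pairwise distinct. If \<open>G\<close> has an edge \<open>ab\<close>, then \<open>V - {b}\<close> is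
zero forcing, so a minimum zero forcing set \<open>S\<close> is a proper subset of \<open>V\<close>, some
force occurs, and the first forcer lies in \<open>S\<close> but not in the reversed set: a
second minimum zero forcing set. Without edges nothing is ever forced, so \<open>V\<close>
is the only zero forcing set.\<close>

text \<open>A pair \<open>(u, v)\<close> records the force \<open>u \<rightarrow> v\<close>; \<open>A\<close> is the set of active
vertices before the first force of the list.\<close>
fun forcing_seq :: "'a set \<Rightarrow> ('a \<Rightarrow> 'a \<Rightarrow> bool) \<Rightarrow> 'a set \<Rightarrow> ('a \<times> 'a) list \<Rightarrow> bool" where
  "forcing_seq V E A [] \<longleftrightarrow> True"
| "forcing_seq V E A ((u, v) # fs) \<longleftrightarrow>
     u \<in> A \<and> v \<in> V \<and> v \<notin> A \<and> E u v \<and> (\<forall>w\<in>V. E u w \<and> w \<noteq> v \<longrightarrow> w \<in> A)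
     \<and> forcing_seq V E (insert v A) fs"

lemma forcing_seq_snoc:
  "forcing_seq V E A (fs @ [(u, v)]) \<longleftrightarrow>
     forcing_seq V E A fs \<and> u \<in> A \<union> snd ` set fs \<and> v \<in> V \<and> v \<notin> A \<union> snd ` set fs
     \<and> E u v \<and> (\<forall>w\<in>V. E u w \<and> w \<noteq> v \<longrightarrow> w \<in> A \<union> snd ` set fs)"
proof (induction fs arbitrary: A)
  case Nil
  then show ?case by simp
next
  case (Cons p fs)
  obtain a b where p: "p = (a, b)" by force
  have "insert b A \<union> snd ` set fs = A \<union> snd ` set (p # fs)"
    using p by auto
  then show ?case
    unfolding p append_Cons forcing_seq.simps Cons.IH by (simp add: p)
qed

lemma forcing_seq_forced:
  "forcing_seq V E A fs \<Longrightarrow> (u, v) \<in> set fs \<Longrightarrow> v \<in> V \<and> v \<notin> A"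
  by (induction fs arbitrary: A) fastforce+

lemma forcing_seq_forcer:
  "forcing_seq V E A fs \<Longrightarrow> (u, v) \<in> set fs \<Longrightarrow> u \<in> A \<union> snd ` set fs"
  by (induction fs arbitrary: A) fastforce+

lemma forcing_seq_edge:
  "forcing_seq V E A fs \<Longrightarrow> (u, v) \<in> set fs \<Longrightarrow> E u v"
  by (induction fs arbitrary: A) auto

lemma forcing_seq_other_neighbour:
  "forcing_seq V E A fs \<Longrightarrow> (u, v) \<in> set fs \<Longrightarrow> w \<in> V \<Longrightarrow> E u w \<Longrightarrow> w \<noteq> v
    \<Longrightarrow> w \<in> A \<union> snd ` set fs"
  by (induction fs arbitrary: A) fastforce+

lemma forcing_seq_distinct_forced:
  "forcing_seq V E A fs \<Longrightarrow> distinct (map snd fs)"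
  by (induction fs arbitrary: A) (auto dest: forcing_seq_forced)

text \<open>A vertex forces at most once: after forcing \<open>v\<close>, all neighbours of \<open>u\<close> are
active, while the next target of \<open>u\<close> would be an inactive neighbour.\<close>
lemma forcing_seq_distinct_forcers:
  "forcing_seq V E A fs \<Longrightarrow> distinct (map fst fs)"
proof (induction fs arbitrary: A)
  case Nil
  then show ?case by simp
next
  case (Cons p fs)
  obtain u v where p: "p = (u, v)" by force
  have tail: "forcing_seq V E (insert v A) fs"
    using Cons.prems p by simp
  have "(u, b) \<notin> set fs" for b
  proof
    assume b: "(u, b) \<in> set fs"
    then have "b \<in> V" "b \<notin> insert v A" "E u b"
      using forcing_seq_forced[OF tail] forcing_seq_edge[OF tail] by auto
    then show False using Cons.prems p by auto
  qed
  then show ?case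
    using Cons.IH[OF tail] p by force
qed

lemma forcing_seq_length_le:
  assumes "forcing_seq V E A fs" and "finite V"
  shows "length fs \<le> card V"
proof -
  have "length fs = card (snd ` set fs)"
    using distinct_card[OF forcing_seq_distinct_forced[OF assms(1)]] by simp
  also have "\<dots> \<le> card V"
    using assms forcing_seq_forced by (intro card_mono) fastforce+
  finally show ?thesis .
qed

text \<open>A longest forcing sequence activates the whole closure, since any vertex of
the closure that it misses could be forced after it.\<close>
lemma zf_closure_subset_forcing_seq:
  assumes "finite V"
  obtains fs where "forcing_seq V E S fs" and "zf_closure V E S \<subseteq> S \<union> snd ` set fs"
proof -
  let ?len = "\<lambda>n. \<exists>fs. forcing_seq V E S fs \<and> length fs = n"
  have "?len 0" by auto
  moreover have "\<forall>n. ?len n \<longrightarrow> n \<le> card V"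
    using forcing_seq_length_le assms by blast
  ultimately obtain n where "?len n" and longest: "\<forall>m. ?len m \<longrightarrow> m \<le> n"
    using Nat.ex_has_greatest_nat[of ?len 0 "card V"] by blast
  then obtain fs where fs: "forcing_seq V E S fs" and len: "length fs = n"
    by blast
  have "x \<in> S \<union> snd ` set fs" if "x \<in> zf_closure V E S" for x
    using that
  proof (induction rule: zf_closure.induct)
    case (init v)
    then show ?case by simp
  next
    case (force u v)
    show ?case
    proof (rule ccontr)
      assume "v \<notin> S \<union> snd ` set fs"
      then have "forcing_seq V E S (fs @ [(u, v)])"
        using force fs by (auto simp: forcing_seq_snoc)
      then have "?len (Suc n)"
        using len by (intro exI[of _ "fs @ [(u, v)]"]) simp
      then show False
        using longest by force
    qed
  qed
  then show ?thesis
    using fs that by blast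
qed

lemma zf_closure_reversed_forcing_seq:
  assumes G: "simple_graph V E" and "S \<subseteq> V"
    and "forcing_seq V E S fs" and "V - fst ` set fs \<subseteq> zf_closure V E T"
  shows "V \<subseteq> zf_closure V E T"
  using assms(3,4)
proof (induction fs rule: rev_induct)
  case Nil
  then show ?case by simp
next
  case (snoc p fs)
  obtain u v where p: "p = (u, v)" by force
  let ?A = "S \<union> snd ` set fs"
  let ?C = "zf_closure V E T"
  have fs: "forcing_seq V E S fs" and "u \<in> ?A" and "v \<in> V" and "v \<notin> ?A" and "E u v"
    using snoc.prems(1) p by (auto simp: forcing_seq_snoc)
  have C: "V - fst ` set fs - {u} \<subseteq> ?C"
    using snoc.prems(2) p by auto
  text \<open>Reverse the last force: \<open>v\<close> forces \<open>u\<close>. A neighbour \<open>w \<noteq> u\<close> of \<open>v\<close> that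
    forced earlier would have had \<open>v\<close> as a second inactive neighbour.\<close>
  have "v \<notin> fst ` set fs"
    using forcing_seq_forcer[OF fs] \<open>v \<notin> ?A\<close> by force
  moreover have "v \<noteq> u"
    using \<open>E u v\<close> G unfolding simple_graph_def by auto
  ultimately have "v \<in> ?C"
    using C \<open>v \<in> V\<close> by blast
  moreover have "u \<in> V" and "E v u"
    using \<open>u \<in> ?A\<close> \<open>S \<subseteq> V\<close> forcing_seq_forced[OF fs] \<open>E u v\<close> G
    unfolding simple_graph_def by auto
  moreover have "w \<in> ?C" if "w \<in> V" "E v w" "w \<noteq> u" for w
  proof -
    have "w \<notin> fst ` set fs"
    proof
      assume "w \<in> fst ` set fs"
      then obtain b where b: "(w, b) \<in> set fs" by force
      have "E w v"
        using \<open>E v w\<close> G unfolding simple_graph_def by blast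
      moreover have "v \<noteq> b"
        using b \<open>v \<notin> ?A\<close> by force
      ultimately have "v \<in> ?A"
        using forcing_seq_other_neighbour[OF fs b \<open>v \<in> V\<close>] by blast
      then show False
        using \<open>v \<notin> ?A\<close> by blast
    qed
    then show ?thesis
      using C that by blast
  qed
  ultimately have "u \<in> ?C"
    using zf_closure.force[of v V E T u] by blast
  then have "V - fst ` set fs \<subseteq> ?C"
    using C by auto
  then show ?case
    using snoc.IH fs by blast
qed

lemma reversed_zero_forcing_set:
  assumes G: "simple_graph V E" and S: "zero_forcing_set V E S"
  obtains fs where "forcing_seq V E S fs" and "V = S \<union> snd ` set fs"
    and "zero_forcing_set V E (V - fst ` set fs)" and "card (V - fst ` set fs) = card S"
proof -
  have "finite V" and "S \<subseteq> V"
    using G S unfolding simple_graph_def zero_forcing_set_def by auto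
  obtain fs where fs: "forcing_seq V E S fs" and "zf_closure V E S \<subseteq> S \<union> snd ` set fs"
    using zf_closure_subset_forcing_seq[OF \<open>finite V\<close>] by blast
  moreover have forced: "snd ` set fs \<subseteq> V - S"
    using forcing_seq_forced[OF fs] by force
  ultimately have V: "V = S \<union> snd ` set fs"
    using S unfolding zero_forcing_set_def by auto
  have forcers: "fst ` set fs \<subseteq> V"
    using forcing_seq_forcer[OF fs] V by force
  have "V - fst ` set fs \<subseteq> zf_closure V E (V - fst ` set fs)"
    by (blast intro: zf_closure.init)
  then have "V \<subseteq> zf_closure V E (V - fst ` set fs)"
    by (rule zf_closure_reversed_forcing_seq[OF G \<open>S \<subseteq> V\<close> fs])
  then have "zero_forcing_set V E (V - fst ` set fs)"
    unfolding zero_forcing_set_def by auto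
  moreover have "card (V - fst ` set fs) = card S"
  proof -
    have "card V = card S + card (snd ` set fs)"
      unfolding V using forced \<open>finite V\<close> \<open>S \<subseteq> V\<close>
      by (intro card_Un_disjoint) (auto intro: finite_subset)
    also have "card (snd ` set fs) = length fs"
      using distinct_card[OF forcing_seq_distinct_forced[OF fs]] by simp
    finally have "card V = card S + length fs" .
    moreover have "card (fst ` set fs) = length fs"
      using distinct_card[OF forcing_seq_distinct_forcers[OF fs]] by simp
    ultimately show ?thesis
      using card_Diff_subset[OF finite_subset[OF forcers \<open>finite V\<close>] forcers] by simp
  qed
  ultimately show ?thesis
    using that[OF fs V] by blast
qed

lemma zero_forcing_set_Diff_neighbour:
  assumes G: "simple_graph V E" and "E a b"
  shows "zero_forcing_set V E (V - {b})"
proof -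
  have "a \<in> V" "b \<in> V" "a \<noteq> b"
    using G \<open>E a b\<close> unfolding simple_graph_def by auto
  then have "b \<in> zf_closure V E (V - {b})"
    using \<open>E a b\<close> by (blast intro: zf_closure.force zf_closure.init)
  then show ?thesis
    unfolding zero_forcing_set_def by (blast intro: zf_closure.init)
qed

lemma min_zero_forcing_set_psubset:
  assumes G: "simple_graph V E" and "E a b" and S: "min_zero_forcing_set V E S"
  shows "S \<subset> V"
proof -
  have "finite V" and "b \<in> V"
    using G \<open>E a b\<close> unfolding simple_graph_def by auto
  have "card S \<le> card (V - {b})"
    using S zero_forcing_set_Diff_neighbour[OF G \<open>E a b\<close>]
    unfolding min_zero_forcing_set_def by blast
  also have "\<dots> < card V"
    using card_Diff1_less[OF \<open>finite V\<close> \<open>b \<in> V\<close>] .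
  finally show ?thesis
    using S unfolding min_zero_forcing_set_def zero_forcing_set_def by auto
qed

lemma min_zero_forcing_set_not_unique:
  assumes G: "simple_graph V E" and S: "min_zero_forcing_set V E S" and "S \<noteq> V"
  obtains S' where "min_zero_forcing_set V E S'" and "S' \<noteq> S"
proof -
  have "zero_forcing_set V E S"
    using S unfolding min_zero_forcing_set_def by blast
  then obtain fs where fs: "forcing_seq V E S fs" and V: "V = S \<union> snd ` set fs"
    and "zero_forcing_set V E (V - fst ` set fs)" and "card (V - fst ` set fs) = card S"
    using reversed_zero_forcing_set[OF G] by blast
  then have "min_zero_forcing_set V E (V - fst ` set fs)"
    using S unfolding min_zero_forcing_set_def by simp
  moreover obtain u v fs' where "fs = (u, v) # fs'"
    using V \<open>S \<noteq> V\<close> by (cases fs) auto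
  then have "u \<in> S - (V - fst ` set fs)"
    using fs by simp
  ultimately show ?thesis
    using that by blast
qed

lemma min_zero_forcing_set_edgeless:
  assumes "\<forall>u v. \<not> E u v"
  shows "min_zero_forcing_set V E S \<longleftrightarrow> S = V"
proof -
  have "zf_closure V E T \<subseteq> T" for T
  proof
    fix x
    assume "x \<in> zf_closure V E T"
    then show "x \<in> T"
      by (induction rule: zf_closure.induct) (use assms in auto)
  qed
  then have "zero_forcing_set V E T \<longleftrightarrow> T = V" for T
    unfolding zero_forcing_set_def by (blast intro: zf_closure.init)
  then show ?thesis
    unfolding min_zero_forcing_set_def by auto
qed

theorem corollary3p3:
  fixes V :: "'a set" and E :: "'a \<Rightarrow> 'a \<Rightarrow> bool"
  assumes "simple_graph V E"
  shows "(\<exists>!S. min_zero_forcing_set V E S) \<longleftrightarrow> (\<forall>u v. \<not> E u v)"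
proof
  assume unique: "\<exists>!S. min_zero_forcing_set V E S"
  show "\<forall>u v. \<not> E u v"
  proof (intro allI notI)
    fix a b
    assume "E a b"
    obtain S where S: "min_zero_forcing_set V E S"
      using unique by blast
    then have "S \<noteq> V"
      using min_zero_forcing_set_psubset[OF assms \<open>E a b\<close>] by blast
    then obtain S' where "min_zero_forcing_set V E S'" and "S' \<noteq> S"
      using min_zero_forcing_set_not_unique[OF assms S] by blast
    then show False
      using S unique by blast
  qed
next
  assume "\<forall>u v. \<not> E u v"
  then show "\<exists>!S. min_zero_forcing_set V E S"
    by (simp add: min_zero_forcing_set_edgeless)
qed

end
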